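(* Let $\beta\in(0,1)$. Let $\mathcal R^{(\beta)}$ be a random closed subset of $[0,1]$ with capacity functional $\mathbb P(\mathcal R^{(\beta)}\cap K\neq\emptyset)=\mathrm{Leb}(K)^\beta$ for all compact $K\subset[0,1]$. Let $Q_\beta$ be an $\mathbb N$-valued random variable with \[ \mathbb P(Q_\beta=k)=\frac{\beta(1-\beta)_{(k-1)\uparrow}}{k!},\quad k\in\mathbb N, \] where $(a)_{n\uparrow}=a(a+1)\cdots(a+n-1)$ for $n\in\mathbb N$ and $(a)_{0\uparrow}=1$, and let $U_1,U_2,\dots$ be i.i.d. uniform on $(0,1)$, independent of $Q_\beta$. Then $\mathcal R^{(\beta)}\overset{d}{=}\bigcup_{i=1}^{Q_\beta}\{U_i\}$ as random closed sets of $[0,1]$.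
   Context: $\mathrm{Leb}$ is Lebesgue measure. Random closed sets are random elements of the space of closed subsets of $[0,1]$ with the Fell topology; their law is determined by the capacity functional $K\mapsto\mathbb P(R\cap K\ne\emptyset)$, $K$ compact. *)

theory Defs
  imports "HOL-Probability.Probability"
begin

definition capacity_functional :: "'a measure \<Rightarrow> ('a \<Rightarrow> real set) \<Rightarrow> real set \<Rightarrow> real" where
  "capacity_functional M R K = measure M {\<omega> \<in> space M. R \<omega> \<inter> K \<noteq> {}}"

text \<open>Two random closed subsets of [0,1] (possibly on different probability spaces) have the same
  law iff their capacity functionals agree on all compact K contained in [0,1] (Choquet).\<close>
definition same_law_rcs ::
  "'a measure \<Rightarrow> ('a \<Rightarrow> real set) \<Rightarrow> 'b measure \<Rightarrow> ('b \<Rightarrow> real set) \<Rightarrow> bool" where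
  "same_law_rcs M R N S \<longleftrightarrow>
     (\<forall>K. compact K \<and> K \<subseteq> {0..1} \<longrightarrow> capacity_functional M R K = capacity_functional N S K)"

end

(*
  For a compact K \<subseteq> [0,1] with Lebesgue measure p, each U_i misses K with probability 1 - p,
  so by the independence of Q and the U_i the union of the first Q points misses K with
  probability E[(1 - p)^Q].  The law of Q is the Sibuya distribution, whose generating function
  is 1 - (1 - s)^\<beta> by the binomial series; hence the union hits K with probability p^\<beta>,
  the capacity functional of R.  The hypothesis only fixes P(Q = k) for k \<ge> 1; that P(Q = 0) = 0
  follows because the Sibuya weights already sum to one: their partial sums are
  1 - pochhammer (1 - \<beta>) n / n!, and pochhammer (1 - \<beta>) n / n! ~ n^(-\<beta>) / \<Gamma>(1 - \<beta>) tends to 0.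
*)
theory Submission
  imports Defs
begin

definition sibuya_weight :: "real \<Rightarrow> nat \<Rightarrow> real" where
  "sibuya_weight \<beta> k = (if k = 0 then 0 else \<beta> * pochhammer (1 - \<beta>) (k - 1) / fact k)"

lemma sibuya_weight_eq_gbinomial:
  "sibuya_weight \<beta> k = of_bool (k = 0) - (\<beta> gchoose k) * (-1) ^ k"
proof (cases k)
  case (Suc j)
  have "(\<beta> gchoose k) * (-1) ^ k = pochhammer (-\<beta>) k / fact k"
    by (simp add: gbinomial_pochhammer power_mult_distrib [symmetric] flip: power_add)
  also have "pochhammer (-\<beta>) k = - \<beta> * pochhammer (1 - \<beta>) j"
    by (simp add: Suc pochhammer_rec)
  finally show ?thesis
    by (simp add: sibuya_weight_def Suc)
qed (simp add: sibuya_weight_def)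

lemma sum_sibuya_weight_atMost:
  "(\<Sum>k\<le>n. sibuya_weight \<beta> k) = 1 - pochhammer (1 - \<beta>) n / fact n"
proof (induction n)
  case (Suc n)
  let ?P = "pochhammer (1 - \<beta>)"
  have "(\<Sum>k\<le>Suc n. sibuya_weight \<beta> k) = 1 - ?P n / fact n + \<beta> * ?P n / fact (Suc n)"
    unfolding sum.atMost_Suc Suc.IH by (simp add: sibuya_weight_def)
  also have "\<dots> = 1 - ?P n * (1 - \<beta> + n) / fact (Suc n)"
    by (simp add: fact_Suc divide_simps) (simp add: algebra_simps)
  also have "\<dots> = 1 - ?P (Suc n) / fact (Suc n)"
    by (simp add: pochhammer_Suc)
  finally show ?case .
qed (simp add: sibuya_weight_def)

lemma LIMSEQ_pochhammer_div_fact: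
  fixes a :: real
  assumes "a < 1"
  shows "(\<lambda>n. pochhammer a n / fact n) \<longlonglongrightarrow> 0"
proof -
  define e where "e n = exp ((1 - a) * ln (real n))" for n
  have "(\<lambda>n. (- a gchoose n) / ((-1) ^ n / e n)) \<longlonglongrightarrow> inverse (Gamma a)"
    using gbinomial_asymptotic[of "- a"] by (simp add: e_def)
  moreover have "(\<lambda>n. inverse (e n)) \<longlonglongrightarrow> 0"
    using assms unfolding e_def by real_asymp
  ultimately have "(\<lambda>n. (- a gchoose n) / ((-1) ^ n / e n) * inverse (e n)) \<longlonglongrightarrow> inverse (Gamma a) * 0"
    by (rule tendsto_mult)
  moreover have "(- a gchoose n) / ((-1) ^ n / e n) * inverse (e n) = pochhammer a n / fact n" for n
    by (simp add: gbinomial_pochhammer e_def power_mult_distrib [symmetric] flip: power_add)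
  ultimately show ?thesis
    by simp
qed

lemma sibuya_weight_sums_one:
  assumes "0 < \<beta>"
  shows "sibuya_weight \<beta> sums 1"
proof -
  have "(\<lambda>n. 1 - pochhammer (1 - \<beta>) n / fact n) \<longlonglongrightarrow> 1 - 0"
    using assms by (intro tendsto_diff tendsto_const LIMSEQ_pochhammer_div_fact) simp
  then have "(\<lambda>n. \<Sum>k<Suc n. sibuya_weight \<beta> k) \<longlonglongrightarrow> 1"
    by (simp add: lessThan_Suc_atMost sum_sibuya_weight_atMost)
  then show ?thesis
    unfolding sums_def by (rule LIMSEQ_imp_Suc)
qed

lemma sibuya_generating_function:
  assumes "0 < \<beta>" "-1 < s" "s \<le> 1"
  shows "(\<lambda>k. sibuya_weight \<beta> k * s ^ k) sums (1 - (1 - s) powr \<beta>)"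
proof (cases "s = 1")
  case True
  then show ?thesis
    using sibuya_weight_sums_one[OF assms(1)] by simp
next
  case False
  have "(\<lambda>k. of_bool (k = 0)) sums (1::real)"
    using sums_single [of 0 "\<lambda>_. 1::real"] by (simp add: of_bool_def)
  moreover have "(\<lambda>k. (\<beta> gchoose k) * (- s) ^ k) sums (1 + - s) powr \<beta>"
    using assms False by (intro gen_binomial_real) auto
  ultimately have "(\<lambda>k. of_bool (k = 0) - (\<beta> gchoose k) * (- s) ^ k) sums (1 - (1 - s) powr \<beta>)"
    using sums_diff by fastforce
  moreover have "of_bool (k = 0) - (\<beta> gchoose k) * (- s) ^ k = sibuya_weight \<beta> k * s ^ k" for k
    by (cases k) (simp_all add: sibuya_weight_eq_gbinomial left_diff_distrib power_minus')
  ultimately show ?thesis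
    by simp
qed

lemma forall_components_in_vimage_algebra:
  fixes X :: "'i \<Rightarrow> 'a \<Rightarrow> 'b::topological_space"
  assumes "finite J" "J \<subseteq> I" "\<And>i. i \<in> J \<Longrightarrow> A i \<in> sets borel"
  shows "{\<omega> \<in> \<Omega>. \<forall>i\<in>J. X i \<omega> \<in> A i}
           \<in> sets (vimage_algebra \<Omega> (\<lambda>\<omega>. \<lambda>i\<in>I. X i \<omega>) (PiM I (\<lambda>_. borel)))"
proof -
  let ?P = "PiM I (\<lambda>_. borel :: 'b measure)"
  have "{f \<in> space ?P. \<forall>i\<in>J. f i \<in> A i} \<in> sets ?P"
    using assms by (intro sets.sets_Collect_finite_All) auto
  then have "(\<lambda>\<omega>. \<lambda>i\<in>I. X i \<omega>) -` {f \<in> space ?P. \<forall>i\<in>J. f i \<in> A i} \<inter> \<Omega>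
               \<in> sets (vimage_algebra \<Omega> (\<lambda>\<omega>. \<lambda>i\<in>I. X i \<omega>) ?P)"
    by (rule in_vimage_algebra)
  also have "(\<lambda>\<omega>. \<lambda>i\<in>I. X i \<omega>) -` {f \<in> space ?P. \<forall>i\<in>J. f i \<in> A i} \<inter> \<Omega>
               = {\<omega> \<in> \<Omega>. \<forall>i\<in>J. X i \<omega> \<in> A i}"
    using assms(2) by (auto simp: space_PiM)
  finally show ?thesis .
qed

context prob_space
begin

lemma prob_forall_indep_vars:
  assumes "indep_vars N X I" "finite J" "J \<subseteq> I" "\<And>i. i \<in> J \<Longrightarrow> A i \<in> sets (N i)"
  shows "prob {\<omega> \<in> space M. \<forall>i\<in>J. X i \<omega> \<in> A i} = (\<Prod>i\<in>J. prob {\<omega> \<in> space M. X i \<omega> \<in> A i})"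
proof (cases "J = {}")
  case True
  then show ?thesis
    by (simp add: prob_space)
next
  case False
  have "indep_sets (\<lambda>i. {X i -` A \<inter> space M | A. A \<in> sets (N i)}) I"
    using assms(1) by (simp add: indep_vars_def2)
  then have "prob (\<Inter>i\<in>J. X i -` A i \<inter> space M) = (\<Prod>i\<in>J. prob (X i -` A i \<inter> space M))"
    using False assms(2-4) by (intro indep_setsD) auto
  moreover have "(\<Inter>i\<in>J. X i -` A i \<inter> space M) = {\<omega> \<in> space M. \<forall>i\<in>J. X i \<omega> \<in> A i}"
    using False by auto
  ultimately show ?thesis
    by (simp add: vimage_def Int_def conj_commute)
qed

lemma prob_uniform_01:
  assumes "X \<in> borel_measurable M" "distr M borel X = uniform_measure lborel {0<..<1::real}"
    and "K \<in> sets borel" "K \<subseteq> {0..1}"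
  shows "prob {\<omega> \<in> space M. X \<omega> \<in> K} = measure lborel K"
proof -
  have "prob {\<omega> \<in> space M. X \<omega> \<in> K} = measure (distr M borel X) K"
    using assms(1,3) by (subst measure_distr) (simp_all add: vimage_def Int_def conj_commute)
  also have "\<dots> = measure lborel ({0<..<1} \<inter> K)"
    unfolding assms(2) using assms(3) by (subst measure_uniform_measure) auto
  also have "\<dots> = measure lborel ({0<..<1} \<inter> K \<union> K \<inter> {0, 1})"
    using assms(3) by (intro measure_Un_null_set [symmetric] finite_imp_null_set_lborel) auto
  also have "{0<..<1} \<inter> K \<union> K \<inter> {0, 1} = K"
    using assms(4) by auto
  finally show ?thesis .
qed

lemma prob_eq_nat_if_sums_one:
  fixes Q :: "'a \<Rightarrow> nat"
  assumes "Q \<in> measurable M (count_space UNIV)" "p sums 1"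
    and "\<And>k. k \<ge> 1 \<Longrightarrow> prob {\<omega> \<in> space M. Q \<omega> = k} = p k"
  shows "prob {\<omega> \<in> space M. Q \<omega> = k} = p k"
proof -
  let ?c = "\<lambda>k. prob {\<omega> \<in> space M. Q \<omega> = k}"
  have "?c sums prob (\<Union>k. {\<omega> \<in> space M. Q \<omega> = k})"
    using assms(1) by (intro finite_measure_UNION) (auto simp: disjoint_family_on_def)
  moreover have "(\<Union>k. {\<omega> \<in> space M. Q \<omega> = k}) = space M"
    by auto
  ultimately have "?c sums 1"
    by (simp add: prob_space)
  moreover have "(\<lambda>k. p k + (if k = 0 then ?c 0 - p 0 else 0)) sums (1 + (?c 0 - p 0))"
    using assms(2) sums_single by (rule sums_add)
  moreover have "?c = (\<lambda>k. p k + (if k = 0 then ?c 0 - p 0 else 0))"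
    using assms(3) by (auto simp: fun_eq_iff)
  ultimately have "?c 0 = p 0"
    using sums_unique2 by fastforce
  then show ?thesis
    using assms(3) by (cases k) auto
qed

lemma sums_prob_indep_random_index:
  fixes Q :: "'a \<Rightarrow> nat"
  assumes indep: "indep_set (sets (vimage_algebra (space M) Q (count_space UNIV))) G"
    and B: "\<And>k. B k \<in> G"
  shows "{\<omega> \<in> space M. \<omega> \<in> B (Q \<omega>)} \<in> events"
    and "(\<lambda>k. prob {\<omega> \<in> space M. Q \<omega> = k} * prob (B k)) sums prob {\<omega> \<in> space M. \<omega> \<in> B (Q \<omega>)}"
proof -
  define A where "A k = {\<omega> \<in> space M. Q \<omega> = k}" for k
  have "Q -` {k} \<inter> space M \<in> sets (vimage_algebra (space M) Q (count_space UNIV))" for k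
    by (rule in_vimage_algebra) simp
  moreover have "Q -` {k} \<inter> space M = A k" for k
    by (auto simp: A_def)
  ultimately have A: "A k \<in> sets (vimage_algebra (space M) Q (count_space UNIV))" for k
    by simp
  have AB_events: "A k \<inter> B k \<in> events" for k
    using subsetD[OF indep_setD_ev1[OF indep] A] subsetD[OF indep_setD_ev2[OF indep] B] by (rule sets.Int)
  have AB_Union: "(\<Union>k. A k \<inter> B k) = {\<omega> \<in> space M. \<omega> \<in> B (Q \<omega>)}"
    by (auto simp: A_def)
  show "{\<omega> \<in> space M. \<omega> \<in> B (Q \<omega>)} \<in> events"
    using AB_events unfolding AB_Union [symmetric] by (intro sets.countable_UN) auto
  have "(\<lambda>k. prob (A k \<inter> B k)) sums prob (\<Union>k. A k \<inter> B k)"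
    using AB_events by (intro finite_measure_UNION) (auto simp: disjoint_family_on_def A_def)
  moreover have "prob (A k \<inter> B k) = prob (A k) * prob (B k)" for k
    using indep_setD[OF indep A B] .
  ultimately have "(\<lambda>k. prob (A k) * prob (B k)) sums prob {\<omega> \<in> space M. \<omega> \<in> B (Q \<omega>)}"
    unfolding AB_Union by simp
  then show "(\<lambda>k. prob {\<omega> \<in> space M. Q \<omega> = k} * prob (B k)) sums prob {\<omega> \<in> space M. \<omega> \<in> B (Q \<omega>)}"
    unfolding A_def .
qed

lemma capacity_functional_uniform_points:
  fixes Q :: "'a \<Rightarrow> nat" and U :: "nat \<Rightarrow> 'a \<Rightarrow> real"
  assumes U_meas: "\<And>i. i \<ge> 1 \<Longrightarrow> U i \<in> borel_measurable M"
    and U_unif: "\<And>i. i \<ge> 1 \<Longrightarrow> distr M borel (U i) = uniform_measure lborel {0<..<1}"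
    and U_indep: "indep_vars (\<lambda>_. borel) U {1..}"
    and QU_indep: "indep_set (sets (vimage_algebra (space M) Q (count_space UNIV)))
           (sets (vimage_algebra (space M) (\<lambda>\<omega>. \<lambda>i\<in>{1..}. U i \<omega>) (PiM {1..} (\<lambda>_. borel))))"
    and K: "K \<in> sets borel" "K \<subseteq> {0..1}"
  shows "(\<lambda>k. prob {\<omega> \<in> space M. Q \<omega> = k} * (1 - measure lborel K) ^ k)
           sums (1 - capacity_functional M (\<lambda>\<omega>. \<Union>i\<in>{1..Q \<omega>}. {U i \<omega>}) K)"
proof -
  define B where "B k = {\<omega> \<in> space M. \<forall>i\<in>{1..k}. U i \<omega> \<in> - K}" for k
  have B_indep: "B k \<in> sets (vimage_algebra (space M) (\<lambda>\<omega>. \<lambda>i\<in>{1..}. U i \<omega>) (PiM {1..} (\<lambda>_. borel)))"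
    for k
    unfolding B_def using K(1) by (intro forall_components_in_vimage_algebra) auto
  have prob_B: "prob (B k) = (1 - measure lborel K) ^ k" for k
  proof -
    have "prob {\<omega> \<in> space M. U i \<omega> \<in> - K} = 1 - measure lborel K" if "i \<ge> 1" for i
    proof -
      have "{\<omega> \<in> space M. U i \<omega> \<in> - K} = space M - {\<omega> \<in> space M. U i \<omega> \<in> K}"
        by auto
      moreover have "{\<omega> \<in> space M. U i \<omega> \<in> K} \<in> events"
        using U_meas[OF that] K(1) by measurable
      ultimately show ?thesis
        using prob_uniform_01[OF U_meas U_unif K] that by (simp add: prob_compl)
    qed
    moreover have "prob (B k) = (\<Prod>i\<in>{1..k}. prob {\<omega> \<in> space M. U i \<omega> \<in> - K})"
      unfolding B_def using U_indep K(1) by (intro prob_forall_indep_vars) auto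
    ultimately show ?thesis
      by simp
  qed
  have "{\<omega> \<in> space M. (\<Union>i\<in>{1..Q \<omega>}. {U i \<omega>}) \<inter> K \<noteq> {}} = space M - {\<omega> \<in> space M. \<omega> \<in> B (Q \<omega>)}"
    by (auto simp: B_def)
  then show ?thesis
    using sums_prob_indep_random_index[OF QU_indep B_indep] prob_B
    by (simp add: capacity_functional_def prob_compl)
qed

end

theorem lemma3p1:
  fixes M :: "'a measure" and \<beta> :: real
    and R :: "'a \<Rightarrow> real set" and Q :: "'a \<Rightarrow> nat" and U :: "nat \<Rightarrow> 'a \<Rightarrow> real"
  assumes "prob_space M"
    and "0 < \<beta>" and "\<beta> < 1"
    \<comment> \<open>R is a random closed subset of [0,1]\<close>
    and "\<And>\<omega>. \<omega> \<in> space M \<Longrightarrow> closed (R \<omega>) \<and> R \<omega> \<subseteq> {0..1}"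
    and "\<And>K. compact K \<Longrightarrow> K \<subseteq> {0..1} \<Longrightarrow> {\<omega> \<in> space M. R \<omega> \<inter> K \<noteq> {}} \<in> sets M"
    \<comment> \<open>capacity functional of R\<close>
    and "\<And>K. compact K \<Longrightarrow> K \<subseteq> {0..1} \<Longrightarrow>
           capacity_functional M R K = measure lborel K powr \<beta>"
    \<comment> \<open>Q is N-valued (N = {1,2,...}) with the given law\<close>
    and "Q \<in> measurable M (count_space UNIV)"
    and "\<And>k::nat. k \<ge> 1 \<Longrightarrow>
           measure M {\<omega> \<in> space M. Q \<omega> = k} = \<beta> * pochhammer (1 - \<beta>) (k - 1) / fact k"
    \<comment> \<open>U_1, U_2, ... i.i.d. uniform on (0,1), independent of Q\<close>
    and "\<And>i. i \<ge> 1 \<Longrightarrow> U i \<in> borel_measurable M"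
    and "\<And>i. i \<ge> 1 \<Longrightarrow> distr M borel (U i) = uniform_measure lborel {0<..<1}"
    and "prob_space.indep_vars M (\<lambda>_. borel) U {1..}"
    and "prob_space.indep_set M
           (sets (vimage_algebra (space M) Q (count_space UNIV)))
           (sets (vimage_algebra (space M) (\<lambda>\<omega>. \<lambda>i\<in>{1..}. U i \<omega>) (PiM {1..} (\<lambda>_. borel))))"
  shows "same_law_rcs M R M (\<lambda>\<omega>. \<Union>i\<in>{1..Q \<omega>}. {U i \<omega>})"
proof -
  interpret prob_space M by fact
  have Q_law: "prob {\<omega> \<in> space M. Q \<omega> = k} = sibuya_weight \<beta> k" for k
  proof (rule prob_eq_nat_if_sums_one)
    show "sibuya_weight \<beta> sums 1"
      using assms(2) by (rule sibuya_weight_sums_one)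
    show "prob {\<omega> \<in> space M. Q \<omega> = k} = sibuya_weight \<beta> k" if "k \<ge> 1" for k
      using assms(8)[OF that] that by (simp add: sibuya_weight_def)
  qed (rule assms(7))
  show ?thesis
    unfolding same_law_rcs_def
  proof (intro allI impI, elim conjE)
    fix K :: "real set"
    assume K: "compact K" "K \<subseteq> {0..1}"
    then have K_borel: "K \<in> sets borel"
      by (simp add: borel_compact)
    have "measure lborel K \<le> measure lborel {0..1::real}"
      using K(2) K_borel by (intro measure_mono_fmeasurable) (auto simp: fmeasurable_def)
    then have "(\<lambda>k. sibuya_weight \<beta> k * (1 - measure lborel K) ^ k) sums (1 - measure lborel K powr \<beta>)"
      using sibuya_generating_function[OF assms(2), of "1 - measure lborel K"] by simp
    moreover have "(\<lambda>k. sibuya_weight \<beta> k * (1 - measure lborel K) ^ k)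
        sums (1 - capacity_functional M (\<lambda>\<omega>. \<Union>i\<in>{1..Q \<omega>}. {U i \<omega>}) K)"
      using capacity_functional_uniform_points[OF assms(9-12) K_borel K(2)] by (simp add: Q_law)
    ultimately show "capacity_functional M R K = capacity_functional M (\<lambda>\<omega>. \<Union>i\<in>{1..Q \<omega>}. {U i \<omega>}) K"
      using assms(6)[OF K] by (auto dest: sums_unique2)
  qed
qed

end
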